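(* In the setting described in the context, at the $k$-th iteration of Algorithm Solve(QVP), for each $v\in V^k$ let $w_v=v+t_v\hat d$ where $t_v$ is the optimal value of $(P^2(v))$. Then $$d_H(\mathcal{P}^k,\mathcal{Y}^{\diamond})\le\max_{v\in V^k}\|w_v-v\|.$$
   Context: Setting: $\mathcal{S}\subset\mathbb{R}^n$ nonempty convex compact; $f=(f_1,\dots,f_p):\mathbb{R}^n\to\mathbb{R}^p$ ($p\ge2$), each $f_i$ strictly quasiconvex on $\mathcal{S}$ (continuous and $h(x^1)<h(x^2)\Rightarrow h(\lambda x^1+(1-\lambda)x^2)<h(x^2)$ for $0<\lambda<1$). Vector inequalities are componentwise, $[a,b]=\{z:a\le z\le b\}$, $e^i$ is the $i$-th unit vector, $e=(1,\dots,1)$. $\mathcal{Y}=f(\mathcal{S})$, $\mathcal{Y}^+=\mathcal{Y}+\mathbb{R}^p_+$. $m_i=\min_{x\in\mathcal{S}}f_i(x)$ (assume $m\notin\mathcal{Y}$); $M\in\mathbb{R}^p$ satisfies $M_i\ge\max_{x\in\mathcal{S}}f_i(x)$ (constructed as the max of $f_i$ over the vertices of a simplex containing $\mathcal{S}$). $\mathcal{Y}^{\diamond}=\mathcal{Y}^+\cap(M-\mathbb{R}^p_+)$. Fix $\hat d>0$; $(P^2(v))$ is $\min_{x\in\mathcal{S}}\max_j (f_j(x)-v_j)/\hat d_j$. For finite $V\subset[m,M]$, the copolyblock with vertex set $V$ is $\bigcup_{v\in V}[v,M]$; a vertex is proper if no other vertex $v'\ne v$ satisfies $v'\le v$. Algorithm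 Solve(QVP) with tolerance $\epsilon\ge0$: set $V^0=\{m\}$, $V_\varepsilon=\emptyset$, $\mathcal{Y}_{WN}=\emptyset$, $k=0$. While $V^k\setminus V_\varepsilon\ne\emptyset$: choose $v^k\in V^k\setminus V_\varepsilon$, solve $(P^2(v^k))$ obtaining optimal $(x^k,t_k)$, set $w^k=v^k+t_k\hat d$, add $f(x^k)$ to $\mathcal{Y}_{WN}$; if $\|w^k-v^k\|\le\epsilon$, add $v^k$ to $V_\varepsilon$ and repeat the loop (without changing $k$); otherwise set $V^{k+1}=(V^k\setminus\{v^k\})\cup\{v^k+(w^k_i-v^k_i)e^i: i=1,\dots,p\}$, remove its improper elements, and increase $k$ by one. $\mathcal{P}^k=\bigcup_{v\in V^k}[v,M]$ ($\mathcal{P}^0=[m,M]$). $d_H(Q_1,Q_2)=\max\{\sup_{a\in Q_1}d(a,Q_2),\sup_{b\in Q_2}d(b,Q_1)\}$ is the Hausdorff distance, $d(a,Q)=\inf_{y\in Q}\|a-y\|$. *)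

theory Defs
  imports "HOL-Analysis.Analysis"
begin

(* Vectors in R^p are elements of real^'p; the order on real^'p is the
   library's componentwise order (less_eq_vec_def), so {a..b} = [a,b]. *)

definition strictly_quasiconvex_on :: "(real^'n) set \<Rightarrow> (real^'n \<Rightarrow> real) \<Rightarrow> bool" where
  "strictly_quasiconvex_on S h \<longleftrightarrow> continuous_on S h \<and>
     (\<forall>x1\<in>S. \<forall>x2\<in>S. \<forall>t::real. h x1 < h x2 \<and> 0 < t \<and> t < 1
        \<longrightarrow> h (t *\<^sub>R x1 + (1 - t) *\<^sub>R x2) < h x2)"

definition ideal_point :: "(real^'n \<Rightarrow> real^'p) \<Rightarrow> (real^'n) set \<Rightarrow> real^'p" where
  "ideal_point f S = (\<chi> i. Inf ((\<lambda>x. f x $ i) ` S))"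

definition P2obj :: "(real^'n \<Rightarrow> real^'p) \<Rightarrow> real^'p \<Rightarrow> real^'p \<Rightarrow> real^'n \<Rightarrow> real" where
  "P2obj f dh v x = Max ((\<lambda>j. (f x $ j - v $ j) / dh $ j) ` UNIV)"

definition P2val :: "(real^'n \<Rightarrow> real^'p) \<Rightarrow> (real^'n) set \<Rightarrow> real^'p \<Rightarrow> real^'p \<Rightarrow> real" where
  "P2val f S dh v = Inf (P2obj f dh v ` S)"

definition new_vertices :: "real^'p \<Rightarrow> real^'p \<Rightarrow> (real^'p) set" where
  "new_vertices v w = {v + (w $ i - v $ i) *\<^sub>R axis i 1 | i. True}"

definition proper_vertices :: "(real^'p) set \<Rightarrow> (real^'p) set" where
  "proper_vertices V = {v \<in> V. \<not> (\<exists>v'\<in>V. v' \<noteq> v \<and> v' \<le> v)}"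

definition copolyblock :: "(real^'p) set \<Rightarrow> real^'p \<Rightarrow> (real^'p) set" where
  "copolyblock V M = (\<Union>v\<in>V. {v..M})"

definition Y_diamond :: "(real^'n \<Rightarrow> real^'p) \<Rightarrow> (real^'n) set \<Rightarrow> real^'p \<Rightarrow> (real^'p) set" where
  "Y_diamond f S M = {y. \<exists>x\<in>S. f x \<le> y} \<inter> {y. y \<le> M}"

definition hausdorff_dist :: "'a::metric_space set \<Rightarrow> 'a set \<Rightarrow> real" where
  "hausdorff_dist Q1 Q2 = max (SUP a\<in>Q1. infdist a Q2) (SUP b\<in>Q2. infdist b Q1)"

(* Reachable states of Algorithm Solve(QVP):
   solve_state f S dh eps k V Veps YWN  means that, in some run of the algorithm,
   the iteration counter is k, the current vertex set is V^k = V, and the sets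
   V_eps and Y_WN are Veps and YWN. *)
inductive solve_state ::
  "(real^'n \<Rightarrow> real^'p) \<Rightarrow> (real^'n) set \<Rightarrow> real^'p \<Rightarrow> real \<Rightarrow>
   nat \<Rightarrow> (real^'p) set \<Rightarrow> (real^'p) set \<Rightarrow> (real^'p) set \<Rightarrow> bool"
  for f S dh eps where
  init: "solve_state f S dh eps 0 {ideal_point f S} {} {}"
| eps_step: "\<lbrakk> solve_state f S dh eps k V Veps YWN; v \<in> V - Veps;
      x \<in> S; P2obj f dh v x = P2val f S dh v;
      norm ((v + P2val f S dh v *\<^sub>R dh) - v) \<le> eps \<rbrakk>
    \<Longrightarrow> solve_state f S dh eps k V (insert v Veps) (insert (f x) YWN)"
| main_step: "\<lbrakk> solve_state f S dh eps k V Veps YWN; v \<in> V - Veps;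
      x \<in> S; P2obj f dh v x = P2val f S dh v;
      \<not> norm ((v + P2val f S dh v *\<^sub>R dh) - v) \<le> eps \<rbrakk>
    \<Longrightarrow> solve_state f S dh eps (Suc k)
          (proper_vertices ((V - {v}) \<union> new_vertices v (v + P2val f S dh v *\<^sub>R dh)))
          Veps (insert (f x) YWN)"

end

theory Submission
  imports Defs
begin

(* The copolyblock P^k always contains Y^diamond, so one half of the Hausdorff distance
   vanishes.  Initially m lies below the whole image.  When a vertex v with
   w = v + t_v dh is split, every point y >= v of the upper image satisfies w_i <= y_i for
   some i (otherwise the image point below y would give (P^2(v)) a value below t_v), so y
   lies above the new vertex v + (w_i - v_i) e^i; discarding improper vertices keeps the
   copolyblock unchanged.
   For the other half, let a lie in [v, M] and let x solve (P^2(v)), so f(x) <= w.  The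
   componentwise maximum of a and f(x) belongs to Y^diamond and differs from a by at most
   w_i - v_i in each coordinate. *)

lemma continuous_on_Max_image:
  fixes g :: "'i \<Rightarrow> 'a::topological_space \<Rightarrow> 'b::linorder_topology"
  assumes "finite I" "I \<noteq> {}" "\<And>j. j \<in> I \<Longrightarrow> continuous_on S (g j)"
  shows "continuous_on S (\<lambda>x. Max ((\<lambda>j. g j x) ` I))"
  using assms
proof (induction I rule: finite_ne_induct)
  case (singleton j)
  then show ?case by simp
next
  case (insert j I)
  have "(\<lambda>x. Max ((\<lambda>j. g j x) ` insert j I)) = (\<lambda>x. max (g j x) (Max ((\<lambda>j. g j x) ` I)))"
    using insert.hyps by auto
  then show ?case using insert by (auto intro!: continuous_on_max)
qed

lemma continuous_on_P2obj:
  assumes "\<forall>i. continuous_on S (\<lambda>x. f x $ i)"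
  shows "continuous_on S (P2obj f dh v)"
  unfolding P2obj_def divide_inverse
  by (rule continuous_on_Max_image) (auto intro!: continuous_intros assms[rule_format])

lemma P2obj_le_iff:
  assumes "\<forall>i. dh $ i > 0"
  shows "P2obj f dh v x \<le> t \<longleftrightarrow> f x \<le> v + t *\<^sub>R dh"
  using assms by (simp add: P2obj_def pos_divide_le_eq less_eq_vec_def algebra_simps)

lemma P2obj_less_iff:
  assumes "\<forall>i. dh $ i > 0"
  shows "P2obj f dh v x < t \<longleftrightarrow> (\<forall>i. f x $ i < (v + t *\<^sub>R dh) $ i)"
  using assms by (simp add: P2obj_def pos_divide_less_eq algebra_simps)

lemma P2val_le_P2obj:
  assumes "compact S" "\<forall>i. continuous_on S (\<lambda>x. f x $ i)" "x \<in> S"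
  shows "P2val f S dh v \<le> P2obj f dh v x"
proof -
  have "bdd_below (P2obj f dh v ` S)"
    using assms(1) continuous_on_P2obj[OF assms(2)]
    by (intro bounded_imp_bdd_below compact_imp_bounded compact_continuous_image)
  then show ?thesis unfolding P2val_def using assms(3) by (simp add: cInf_lower)
qed

lemma P2val_attained:
  assumes "compact S" "S \<noteq> {}" "\<forall>i. continuous_on S (\<lambda>x. f x $ i)"
  obtains x where "x \<in> S" "P2obj f dh v x = P2val f S dh v"
proof -
  obtain x where x: "x \<in> S" "\<And>y. y \<in> S \<Longrightarrow> P2obj f dh v x \<le> P2obj f dh v y"
    using continuous_attains_inf[OF assms(1,2) continuous_on_P2obj[OF assms(3)]] by blast
  then have "P2val f S dh v = P2obj f dh v x"
    unfolding P2val_def by (intro cInf_eq_minimum) auto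
  with x that show ?thesis by simp
qed

lemma ideal_point_le:
  assumes "\<forall>i. bdd_below ((\<lambda>x. f x $ i) ` S)" "x \<in> S"
  shows "ideal_point f S \<le> f x"
  using assms by (auto simp: ideal_point_def less_eq_vec_def intro!: cInf_lower)

lemma ex_proper_vertex_le:
  fixes V :: "(real^'p) set"
  assumes "finite V" "u \<in> V"
  shows "\<exists>v\<in>proper_vertices V. v \<le> u"
proof -
  obtain m where m: "m \<in> V" "m \<le> u" "\<forall>v\<in>V. v \<le> m \<longrightarrow> m = v"
    using finite_has_minimal2[OF assms] by blast
  then have "m \<in> proper_vertices V" by (auto simp: proper_vertices_def)
  with m(2) show ?thesis by blast
qed

lemma finite_new_vertices: "finite (new_vertices v w)"
proof -
  have "new_vertices v w = (\<lambda>i. v + (w $ i - v $ i) *\<^sub>R axis i 1) ` UNIV"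
    unfolding new_vertices_def by auto
  then show ?thesis by simp
qed

lemma new_vertex_le:
  assumes "v \<le> y" "w $ i \<le> y $ i"
  shows "v + (w $ i - v $ i) *\<^sub>R axis i 1 \<le> y"
  using assms by (auto simp: less_eq_vec_def axis_def)

lemma ex_new_vertex_le:
  assumes "\<forall>i. dh $ i > 0" "v \<le> y" "f x \<le> y" "t \<le> P2obj f dh v x"
  shows "\<exists>u\<in>new_vertices v (v + t *\<^sub>R dh). u \<le> y"
proof -
  obtain i where "(v + t *\<^sub>R dh) $ i \<le> f x $ i"
    using assms(4) P2obj_less_iff[OF assms(1)] by (meson not_le)
  also have "\<dots> \<le> y $ i" using assms(3) by (simp add: less_eq_vec_def)
  finally have "v + ((v + t *\<^sub>R dh) $ i - v $ i) *\<^sub>R axis i 1 \<le> y"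
    using assms(2) by (rule new_vertex_le[rotated])
  then show ?thesis unfolding new_vertices_def by blast
qed

lemma solve_state_finite:
  "solve_state f S dh eps k V Veps YWN \<Longrightarrow> finite V"
  by (induction rule: solve_state.induct)
     (auto simp: proper_vertices_def finite_new_vertices)

lemma solve_state_covers_upper_image:
  assumes "compact S" "\<forall>i. continuous_on S (\<lambda>x. f x $ i)"
    and dh: "\<forall>i. dh $ i > 0"
    and "solve_state f S dh eps k V Veps YWN" "x \<in> S" "f x \<le> y"
  shows "\<exists>v\<in>V. v \<le> y"
  using assms(4-)
proof (induction arbitrary: x y rule: solve_state.induct)
  case init
  have "\<forall>i. bdd_below ((\<lambda>x. f x $ i) ` S)"
    using assms(1,2) by (auto intro!: bounded_imp_bdd_below compact_imp_bounded
        compact_continuous_image)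
  then have "ideal_point f S \<le> f x" using init(1) by (rule ideal_point_le)
  with init show ?case by (auto intro: order_trans)
next
  case eps_step
  then show ?case by blast
next
  case (main_step k V Veps YWN v x')
  let ?U = "(V - {v}) \<union> new_vertices v (v + P2val f S dh v *\<^sub>R dh)"
  obtain u where u: "u \<in> V" "u \<le> y" using main_step by blast
  have "\<exists>u\<in>?U. u \<le> y"
  proof (cases "u = v")
    case True
    have "\<exists>u\<in>new_vertices v (v + P2val f S dh v *\<^sub>R dh). u \<le> y"
      using main_step.prems u True P2val_le_P2obj[OF assms(1,2) main_step.prems(1)]
      by (intro ex_new_vertex_le[OF dh, where f = f and x = x]) auto
    then show ?thesis by blast
  qed (use u in blast)
  then obtain u' where u': "u' \<in> ?U" "u' \<le> y" by blast
  have "finite ?U"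
    using solve_state_finite[OF main_step.hyps(1)] by (simp add: finite_new_vertices)
  then show ?case using ex_proper_vertex_le[OF _ u'(1)] u'(2) order_trans by blast
qed

lemma hausdorff_dist_le_of_subset:
  fixes Q1 Q2 :: "'a::metric_space set"
  assumes "Q2 \<noteq> {}" "Q2 \<subseteq> Q1" "\<And>a. a \<in> Q1 \<Longrightarrow> infdist a Q2 \<le> D"
  shows "hausdorff_dist Q1 Q2 \<le> D"
proof -
  have "0 \<le> D" using assms infdist_nonneg order_trans by blast
  then have "(SUP b\<in>Q2. infdist b Q1) \<le> D"
    using assms(1,2) by (intro cSUP_least) (auto simp: infdist_zero subsetD)
  moreover have "(SUP a\<in>Q1. infdist a Q2) \<le> D"
    using assms by (intro cSUP_least) auto
  ultimately show ?thesis by (simp add: hausdorff_dist_def)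
qed

lemma norm_diff_sup_le:
  fixes a c v w :: "real^'p"
  assumes "v \<le> a" "c \<le> w"
  shows "norm (a - sup a c) \<le> norm (w - v)"
proof (rule norm_le_componentwise_cart)
  fix i
  show "norm ((a - sup a c) $ i) \<le> norm ((w - v) $ i)"
    using assms by (auto simp: sup_vec_def sup_max less_eq_vec_def dest!: spec[of _ i])
qed

lemma infdist_Y_diamond_le:
  assumes "compact S" "S \<noteq> {}" "\<forall>i. continuous_on S (\<lambda>x. f x $ i)"
    and dh: "\<forall>i. dh $ i > 0"
    and "\<forall>x\<in>S. f x \<le> M" "v \<le> a" "a \<le> M"
  shows "infdist a (Y_diamond f S M) \<le> norm ((v + P2val f S dh v *\<^sub>R dh) - v)"
proof -
  obtain x where x: "x \<in> S" "P2obj f dh v x = P2val f S dh v"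
    using P2val_attained[OF assms(1-3)] by blast
  then have "f x \<le> v + P2val f S dh v *\<^sub>R dh"
    using P2obj_le_iff[OF dh] by (metis order_refl)
  moreover have "sup a (f x) \<in> Y_diamond f S M"
    using x assms(5,7) by (auto simp: Y_diamond_def intro!: bexI[of _ x])
  then have "infdist a (Y_diamond f S M) \<le> norm (a - sup a (f x))"
    by (metis infdist_le dist_norm)
  ultimately show ?thesis
    using norm_diff_sup_le[OF assms(6)] order_trans by blast
qed

theorem mainTheorem5:
  fixes f :: "real^'n \<Rightarrow> real^'p" and S :: "(real^'n) set"
    and M dh :: "real^'p" and eps :: real
    and k :: nat and V Veps YWN :: "(real^'p) set"
  assumes "CARD('p) \<ge> 2"
    and "S \<noteq> {}" and "convex S" and "compact S"
    and "\<forall>i. strictly_quasiconvex_on S (\<lambda>x. f x $ i)"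
    and "ideal_point f S \<notin> f ` S"
    and "\<forall>i. \<forall>x\<in>S. f x $ i \<le> M $ i"
    and "\<forall>i. dh $ i > 0"
    and "eps \<ge> 0"
    and "solve_state f S dh eps k V Veps YWN"
  shows "hausdorff_dist (copolyblock V M) (Y_diamond f S M)
           \<le> Max ((\<lambda>v. norm ((v + P2val f S dh v *\<^sub>R dh) - v)) ` V)"
proof -
  let ?D = "Max ((\<lambda>v. norm ((v + P2val f S dh v *\<^sub>R dh) - v)) ` V)"
  have cont: "\<forall>i. continuous_on S (\<lambda>x. f x $ i)"
    using assms(5) by (auto simp: strictly_quasiconvex_on_def)
  have below_M: "\<forall>x\<in>S. f x \<le> M"
    using assms(7) by (simp add: less_eq_vec_def)
  have "Y_diamond f S M \<noteq> {}"
    using assms(2) below_M by (auto simp: Y_diamond_def)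
  moreover have "Y_diamond f S M \<subseteq> copolyblock V M"
    using solve_state_covers_upper_image[OF assms(4) cont assms(8,10)]
    by (fastforce simp: Y_diamond_def copolyblock_def)
  moreover have "infdist a (Y_diamond f S M) \<le> ?D" if a: "a \<in> copolyblock V M" for a
  proof -
    obtain v where v: "v \<in> V" "v \<le> a" "a \<le> M" using a by (auto simp: copolyblock_def)
    have "infdist a (Y_diamond f S M) \<le> norm ((v + P2val f S dh v *\<^sub>R dh) - v)"
      using infdist_Y_diamond_le[OF assms(4,2) cont assms(8) below_M v(2,3)] .
    also have "\<dots> \<le> ?D"
      using v(1) solve_state_finite[OF assms(10)] by (intro Max_ge) auto
    finally show ?thesis .
  qed
  ultimately show ?thesis by (rule hausdorff_dist_le_of_subset)
qed

end
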